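(* Let $f=(f_V,\{f_{l,v}\}_{v\in V})\colon \mathcal{G}\to \mathcal{G}'$ be a moment graph morphism and let $\xi=\{\xi_v\}_{v\in V}$ be a $\mathcal{G}$-monodromy such that if $v - w\in E$ and $f_V(v)\neq f_V(w)$, then $\xi_v(l'(f_E(v - w)))\in l(v - w)\mathbb{Z}$. Then there is a ring homomorphism between structure algebras \[ f^{\xi\ast}\colon \mathcal{Z}(\mathcal{G}') \to \mathcal{Z}(\mathcal{G}), \quad (z_{v'})_{v'\in V'}\mapsto (\xi_v(z_{f_V(v)}))_{v\in V}, \] called the pull-back map induced by $f$ and twisted by $\xi$.
   Context: A moment graph on a lattice $\Lambda$ is $\mathcal{G}=\big((V,\le), l\colon E\to \Lambda\setminus\{0\}\big)$ with $(V,\le)$ a poset, $E\subset V\times V$ a set of directed edges $v\to w$ labelled by $l(v\to w)\neq 0$, and $v\le w$, $v\ne w$ for every edge $v\to w$; $v - w$ denotes the underlying unoriented edge. A morphism $f\colon\mathcal{G}\to\mathcal{G}'=\big((V',\le'),l'\colon E'\to\Lambda\setminus\{0\}\big)$ consists of a poset map $f_V\colon V\to V'$ such that for each edge $v - w\in E$ either $f_V(v)=f_V(w)$ or $f_V(v) - f_V(w)\in E'$ (in the latter case set $f_E(v - w):=f_V(v) - f_V(w)$), and $\mathbb{Z}$-linear automorphisms $f_{l,v}$ of $\Lambda$ such that for each edge $v - w$ with $f_V(v)\ne f_V(w)$: $f_{l,v}(l(v - w))=\pm l'(f_E(v - w))$ and $f_{l,v}\equiv f_{l,w}$ modulo $l'(f_E(v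 - w))\mathbb{Z}$. A $\mathcal{G}$-monodromy is a collection $\{\xi_v\}_{v\in V}$ of automorphisms of $\Lambda$ with $\xi_v(\lambda)-\xi_w(\lambda)\in l(v\to w)\mathbb{Z}$ for all $v\to w\in E$, $\lambda\in\Lambda$; automorphisms of $\Lambda$ are extended to the ring $S$. For $S=\mathbb{Z}[\Lambda]$ (with $x_\lambda=1-e^{-\lambda}$) or $S=S^*(\Lambda)$ (with $x_\lambda=\lambda$), the structure algebra is $\mathcal{Z}(\mathcal{G})=\{(z_v)_v\in\prod_{v\in V}S\mid z_v-z_w\in x_{l(v\to w)}S\ \forall v\to w\in E\}$ with coordinatewise multiplication. *)

theory Defs
  imports "HOL-Analysis.Finite_Cartesian_Product" "HOL-Library.Poly_Mapping"
begin

type_synonym 'n lat = "int ^ 'n"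

text \<open>Group ring Z[Lambda] (finitely supported functions Lambda -> Z with convolution)
  and symmetric algebra S*(Lambda) = Z[t_i | i in 'n] (monomials 'n =>0 nat).\<close>
type_synonym 'n grp_ring = "('n lat) \<Rightarrow>\<^sub>0 int"
type_synonym 'n sym_alg = "('n \<Rightarrow>\<^sub>0 nat) \<Rightarrow>\<^sub>0 int"

definition lat_aut :: "('n::finite lat \<Rightarrow> 'n lat) \<Rightarrow> bool" where
  "lat_aut \<phi> \<longleftrightarrow> bij \<phi> \<and> (\<forall>a b. \<phi> (a + b) = \<phi> a + \<phi> b)"

definition lat_mult :: "'n::finite lat \<Rightarrow> 'n lat \<Rightarrow> bool" where
  "lat_mult a l \<longleftrightarrow> (\<exists>k::int. a = k *s l)"

definition x_grp :: "'n::finite lat \<Rightarrow> 'n grp_ring" where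
  "x_grp a = 1 - Poly_Mapping.single (- a) 1"

definition sym_lin :: "'n::finite lat \<Rightarrow> 'n sym_alg" where
  "sym_lin a = (\<Sum>i\<in>UNIV. Poly_Mapping.single (Poly_Mapping.single i 1) (a $ i))"

definition x_sym :: "'n::finite lat \<Rightarrow> 'n sym_alg" where
  "x_sym a = sym_lin a"

definition grp_act :: "('n::finite lat \<Rightarrow> 'n lat) \<Rightarrow> 'n grp_ring \<Rightarrow> 'n grp_ring" where
  "grp_act \<phi> p = (\<Sum>\<mu>\<in>Poly_Mapping.keys p. Poly_Mapping.single (\<phi> \<mu>) (Poly_Mapping.lookup p \<mu>))"

definition mon_act :: "('n::finite lat \<Rightarrow> 'n lat) \<Rightarrow> ('n \<Rightarrow>\<^sub>0 nat) \<Rightarrow> 'n sym_alg" where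
  "mon_act \<phi> m = (\<Prod>i\<in>Poly_Mapping.keys m. sym_lin (\<phi> (axis i 1)) ^ Poly_Mapping.lookup m i)"

definition sym_act :: "('n::finite lat \<Rightarrow> 'n lat) \<Rightarrow> 'n sym_alg \<Rightarrow> 'n sym_alg" where
  "sym_act \<phi> p = (\<Sum>m\<in>Poly_Mapping.keys p. Poly_Mapping.single 0 (Poly_Mapping.lookup p m) * mon_act \<phi> m)"

definition moment_graph ::
  "'v set \<Rightarrow> ('v \<times> 'v) set \<Rightarrow> ('v \<times> 'v) set \<Rightarrow> ('v \<times> 'v \<Rightarrow> 'n::finite lat) \<Rightarrow> bool" where
  "moment_graph V le E l \<longleftrightarrow> partial_order_on V le \<and> E \<subseteq> V \<times> V \<and>
     (\<forall>(v, w)\<in>E. l (v, w) \<noteq> 0 \<and> (v, w) \<in> le \<and> v \<noteq> w)"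

definition uedge :: "('v \<times> 'v) set \<Rightarrow> 'v \<Rightarrow> 'v \<Rightarrow> bool" where
  "uedge E v w \<longleftrightarrow> (v, w) \<in> E \<or> (w, v) \<in> E"

definition ulab :: "('v \<times> 'v) set \<Rightarrow> ('v \<times> 'v \<Rightarrow> 'n lat) \<Rightarrow> 'v \<Rightarrow> 'v \<Rightarrow> 'n lat" where
  "ulab E l v w = (if (v, w) \<in> E then l (v, w) else l (w, v))"

definition mg_morphism ::
  "'v set \<Rightarrow> ('v \<times> 'v) set \<Rightarrow> ('v \<times> 'v) set \<Rightarrow> ('v \<times> 'v \<Rightarrow> 'n::finite lat) \<Rightarrow>
   'u set \<Rightarrow> ('u \<times> 'u) set \<Rightarrow> ('u \<times> 'u) set \<Rightarrow> ('u \<times> 'u \<Rightarrow> 'n lat) \<Rightarrow>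
   ('v \<Rightarrow> 'u) \<Rightarrow> ('v \<Rightarrow> 'n lat \<Rightarrow> 'n lat) \<Rightarrow> bool" where
  "mg_morphism V le E l V' le' E' l' fV fl \<longleftrightarrow>
     (\<forall>v\<in>V. fV v \<in> V') \<and>
     (\<forall>v\<in>V. \<forall>w\<in>V. (v, w) \<in> le \<longrightarrow> (fV v, fV w) \<in> le') \<and>
     (\<forall>v\<in>V. lat_aut (fl v)) \<and>
     (\<forall>(v, w)\<in>E. fV v = fV w \<or> uedge E' (fV v) (fV w)) \<and>
     (\<forall>(v, w)\<in>E. fV v \<noteq> fV w \<longrightarrow>
        (fl v (l (v, w)) = ulab E' l' (fV v) (fV w) \<or>
         fl v (l (v, w)) = - ulab E' l' (fV v) (fV w)) \<and>
        (\<forall>a. lat_mult (fl v a - fl w a) (ulab E' l' (fV v) (fV w))))"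

definition monodromy ::
  "'v set \<Rightarrow> ('v \<times> 'v) set \<Rightarrow> ('v \<times> 'v \<Rightarrow> 'n::finite lat) \<Rightarrow> ('v \<Rightarrow> 'n lat \<Rightarrow> 'n lat) \<Rightarrow> bool" where
  "monodromy V E l \<xi> \<longleftrightarrow> (\<forall>v\<in>V. lat_aut (\<xi> v)) \<and>
     (\<forall>(v, w)\<in>E. \<forall>a. lat_mult (\<xi> v a - \<xi> w a) (l (v, w)))"

text \<open>Structure algebra: elements of prod_{v in V} S, represented as functions vanishing off V.\<close>
definition struct_alg ::
  "('n::finite lat \<Rightarrow> 's::comm_ring_1) \<Rightarrow> 'v set \<Rightarrow> ('v \<times> 'v) set \<Rightarrow> ('v \<times> 'v \<Rightarrow> 'n lat) \<Rightarrow> ('v \<Rightarrow> 's) set" where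
  "struct_alg x V E l = {z. (\<forall>v. v \<notin> V \<longrightarrow> z v = 0) \<and> (\<forall>(v, w)\<in>E. x (l (v, w)) dvd (z v - z w))}"

definition pullback ::
  "(('n lat \<Rightarrow> 'n lat) \<Rightarrow> 's \<Rightarrow> 's) \<Rightarrow> ('v \<Rightarrow> 'n lat \<Rightarrow> 'n lat) \<Rightarrow> ('v \<Rightarrow> 'u) \<Rightarrow> 'v set \<Rightarrow> ('u \<Rightarrow> 's::zero) \<Rightarrow> ('v \<Rightarrow> 's)" where
  "pullback act \<xi> fV V z = (\<lambda>v. if v \<in> V then act (\<xi> v) (z (fV v)) else 0)"

definition is_ring_hom_between ::
  "('n::finite lat \<Rightarrow> 's::comm_ring_1) \<Rightarrow> 'v set \<Rightarrow> ('v \<times> 'v) set \<Rightarrow> ('v \<times> 'v \<Rightarrow> 'n lat) \<Rightarrow>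
   'u set \<Rightarrow> ('u \<times> 'u) set \<Rightarrow> ('u \<times> 'u \<Rightarrow> 'n lat) \<Rightarrow> (('u \<Rightarrow> 's) \<Rightarrow> ('v \<Rightarrow> 's)) \<Rightarrow> bool" where
  "is_ring_hom_between x V E l V' E' l' F \<longleftrightarrow>
     (\<forall>z\<in>struct_alg x V' E' l'. F z \<in> struct_alg x V E l) \<and>
     F (\<lambda>u. if u \<in> V' then 1 else 0) = (\<lambda>v. if v \<in> V then 1 else 0) \<and>
     (\<forall>z\<in>struct_alg x V' E' l'. \<forall>z'\<in>struct_alg x V' E' l'.
        F (\<lambda>u. z u + z' u) = (\<lambda>v. F z v + F z' v) \<and>
        F (\<lambda>u. z u * z' u) = (\<lambda>v. F z v * F z' v))"

end

theory Submission
  imports Defs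
begin

text \<open>The pull-back is coordinatewise the extension of \<open>\<xi> v\<close> to \<open>S\<close>, hence a ring map;
  the point is that it lands in the structure algebra. For an edge \<open>v \<rightarrow> w\<close> with
  \<open>fV v \<noteq> fV w\<close> and \<open>L = l'(fV v - fV w)\<close> write \<open>z (fV v) = z (fV w) + x L * q\<close>; then
  \<open>\<xi> v (z (fV v)) - \<xi> w (z (fV w)) = (\<xi> v - \<xi> w) (z (fV w)) + x (\<xi> v L) * \<xi> v q\<close>.
  The first summand is divisible by \<open>x (l (v, w))\<close> because \<open>\<xi> v \<equiv> \<xi> w\<close> modulo \<open>l (v, w)\<close>
  (checked on the \<int>-basis of \<open>S\<close>), the second because \<open>\<xi> v L \<in> l (v, w) \<int>\<close> and
  \<open>x \<lambda>\<close> divides \<open>x (k \<lambda>)\<close>. Only the vertex map of the morphism enters.\<close>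

lemma frag_cmul_eq_single_mult: "frag_cmul c p = Poly_Mapping.single 0 c * p"
  by (rule poly_mapping_eqI) (simp flip: mult_map_scale_conv_mult add: map.rep_eq when_def)

lemma frag_cmul_single: "frag_cmul c (Poly_Mapping.single a d) = Poly_Mapping.single a (c * d)"
  by (rule poly_mapping_eqI) (simp add: lookup_single when_def)

lemma frag_cmul_frag_of: "frag_cmul c (frag_of a) = Poly_Mapping.single a c"
  by (simp add: frag_cmul_single)

lemma frag_extend_one:
  assumes "f 0 = 1"
  shows "frag_extend f 1 = 1"
  using frag_extend_of[of f 0] assms by simp

lemma frag_extend_mult:
  fixes f :: "'a::monoid_add \<Rightarrow> 'b::comm_monoid_add \<Rightarrow>\<^sub>0 int"
  assumes "\<And>a b. f (a + b) = f a * f b"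
  shows "frag_extend f (p * q) = frag_extend f p * frag_extend f q"
proof -
  have frag_of_left: "frag_extend f (frag_of a * q) = f a * frag_extend f q" for a
    using subset_UNIV
  proof (induction q rule: frag_induction)
    case (one b)
    then show ?case by (simp add: mult_single assms)
  qed (simp_all add: frag_extend_diff right_diff_distrib)
  show ?thesis
    using subset_UNIV
    by (induction p rule: frag_induction)
      (simp_all add: frag_of_left frag_extend_diff left_diff_distrib)
qed

lemma dvd_frag_extend_diff:
  fixes d :: "'b::comm_monoid_add \<Rightarrow>\<^sub>0 int"
  assumes "\<And>a. d dvd f a - g a"
  shows "d dvd frag_extend f p - frag_extend g p"
  using subset_UNIV
proof (induction p rule: frag_induction)
  case (diff a b)
  have "frag_extend f (a - b) - frag_extend g (a - b)
      = (frag_extend f a - frag_extend g a) - (frag_extend f b - frag_extend g b)"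
    by (simp add: frag_extend_diff)
  with diff show ?case by simp
qed (simp_all add: assms)

lemma lat_aut_additive: "lat_aut \<phi> \<Longrightarrow> additive \<phi>"
  by (simp add: lat_aut_def additive_def)

lemma additive_vector_smult:
  fixes \<phi> :: "int ^ 'n \<Rightarrow> int ^ 'm"
  assumes "additive \<phi>"
  shows "\<phi> (k *s x) = k *s \<phi> x"
proof (induction k rule: int_induct[where k = 0])
  case base
  show ?case using additive.zero[OF assms] by simp
next
  case (step1 i)
  then show ?case by (simp add: vector_sadd_rdistrib additive.add[OF assms])
next
  case (step2 i)
  then show ?case by (simp add: vector_sub_rdistrib additive.diff[OF assms])
qed

lemma additive_basis_expansion:
  fixes \<phi> :: "int ^ 'n \<Rightarrow> int ^ 'm"
  assumes "additive \<phi>"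
  shows "\<phi> x = (\<Sum>i\<in>UNIV. (x $ i) *s \<phi> (axis i 1))"
proof -
  have "\<phi> x = \<phi> (\<Sum>i\<in>UNIV. (x $ i) *s axis i 1)" by (simp add: basis_expansion)
  then show ?thesis by (simp add: additive.sum[OF assms] additive_vector_smult[OF assms])
qed

lemma dvd_diff_shift_multiple:
  fixes F :: "int ^ 'n \<Rightarrow> 'r::comm_ring_1"
  assumes step: "\<And>\<mu>. d dvd F \<mu> - F (\<mu> + l)"
  shows "d dvd F \<mu> - F (\<mu> + k *s l)"
proof (induction k rule: int_induct[where k = 0])
  case (step1 i)
  have "\<mu> + (i + 1) *s l = (\<mu> + i *s l) + l"
    by (simp add: vector_sadd_rdistrib add.assoc)
  then have "F \<mu> - F (\<mu> + (i + 1) *s l)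
      = (F \<mu> - F (\<mu> + i *s l)) + (F (\<mu> + i *s l) - F ((\<mu> + i *s l) + l))"
    by (simp add: add.assoc)
  with step1 step show ?case by (metis dvd_add)
next
  case (step2 i)
  have "(\<mu> + (i - 1) *s l) + l = \<mu> + i *s l"
    by (simp add: vector_sub_rdistrib)
  then have "F \<mu> - F (\<mu> + (i - 1) *s l)
      = (F \<mu> - F (\<mu> + i *s l)) - (F (\<mu> + (i - 1) *s l) - F ((\<mu> + (i - 1) *s l) + l))"
    by (simp add: add.assoc)
  with step2 step show ?case by (metis dvd_diff)
qed simp

lemma grp_act_eq_frag_extend: "grp_act \<phi> = frag_extend (\<lambda>\<mu>. frag_of (\<phi> \<mu>))"
  by (simp add: fun_eq_iff grp_act_def frag_extend_def frag_cmul_frag_of)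

lemma x_grp_dvd_frag_of_diff: "x_grp l dvd frag_of \<mu> - frag_of (\<mu> + k *s l)"
proof (rule dvd_diff_shift_multiple)
  fix \<mu>
  have "frag_of \<mu> - frag_of (\<mu> + l) = - (frag_of (\<mu> + l) * x_grp l)"
    by (simp add: x_grp_def right_diff_distrib mult_single)
  then show "x_grp l dvd frag_of \<mu> - frag_of (\<mu> + l)" by simp
qed

lemma x_grp_dvd_x_grp_smult: "x_grp l dvd x_grp (k *s l)"
  using x_grp_dvd_frag_of_diff[of l 0 "- k"] by (simp add: x_grp_def vector_smult_lneg)

lemma x_grp_dvd_grp_act_diff:
  assumes "\<And>a. lat_mult (\<phi> a - \<psi> a) l"
  shows "x_grp l dvd grp_act \<phi> p - grp_act \<psi> p"
  unfolding grp_act_eq_frag_extend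
proof (rule dvd_frag_extend_diff)
  fix a
  obtain k where "\<phi> a = \<psi> a + k *s l"
    using assms[of a] by (auto simp: lat_mult_def algebra_simps)
  then show "x_grp l dvd frag_of (\<phi> a) - frag_of (\<psi> a)"
    using x_grp_dvd_frag_of_diff[of l "\<psi> a" k] by (metis dvd_minus_iff minus_diff_eq)
qed

lemma grp_act_add: "grp_act \<phi> (p + q) = grp_act \<phi> p + grp_act \<phi> q"
  by (simp add: grp_act_eq_frag_extend frag_extend_add)

lemma
  assumes "additive \<phi>"
  shows grp_act_mult: "grp_act \<phi> (p * q) = grp_act \<phi> p * grp_act \<phi> q"
    and grp_act_one: "grp_act \<phi> 1 = 1"
    and grp_act_x_grp: "grp_act \<phi> (x_grp L) = x_grp (\<phi> L)"
  using additive.zero[OF assms] additive.minus[OF assms]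
  by (simp_all add: grp_act_eq_frag_extend frag_extend_mult frag_extend_one frag_extend_diff
      additive.add[OF assms] mult_single x_grp_def flip: single_one)

lemma dvd_prod_power_diff:
  fixes d :: "'r::comm_ring_1"
  assumes "\<And>i. i \<in> I \<Longrightarrow> d dvd a i - b i"
  shows "d dvd (\<Prod>i\<in>I. a i ^ n i) - (\<Prod>i\<in>I. b i ^ n i)"
  using assms
proof (induction I rule: infinite_finite_induct)
  case (insert j I)
  let ?A = "\<Prod>i\<in>I. a i ^ n i" and ?B = "\<Prod>i\<in>I. b i ^ n i"
  have "d dvd a j ^ n j - b j ^ n j"
    using insert.prems by (simp add: power_diff_sumr2)
  moreover have "a j ^ n j * ?A - b j ^ n j * ?B
      = (a j ^ n j - b j ^ n j) * ?A + b j ^ n j * (?A - ?B)"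
    by (simp add: algebra_simps)
  ultimately show ?case
    using insert by simp
qed simp_all

lemma sym_act_eq_frag_extend: "sym_act \<phi> = frag_extend (mon_act \<phi>)"
  by (simp add: fun_eq_iff sym_act_def frag_extend_def frag_cmul_eq_single_mult)

lemma mon_act_eq_prod_UNIV:
  "mon_act \<phi> m = (\<Prod>i\<in>UNIV. sym_lin (\<phi> (axis i 1)) ^ Poly_Mapping.lookup m i)"
  unfolding mon_act_def by (rule prod.mono_neutral_left) (auto simp: in_keys_iff)

lemma mon_act_add: "mon_act \<phi> (m + m') = mon_act \<phi> m * mon_act \<phi> m'"
  by (simp add: mon_act_eq_prod_UNIV lookup_add power_add prod.distrib)

lemma mon_act_zero: "mon_act \<phi> 0 = 1"
  by (simp add: mon_act_def)

lemma mon_act_single: "mon_act \<phi> (Poly_Mapping.single i 1) = sym_lin (\<phi> (axis i 1))"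
  by (simp add: mon_act_def)

lemma
  shows sym_act_add: "sym_act \<phi> (p + q) = sym_act \<phi> p + sym_act \<phi> q"
    and sym_act_mult: "sym_act \<phi> (p * q) = sym_act \<phi> p * sym_act \<phi> q"
    and sym_act_one: "sym_act \<phi> 1 = 1"
  by (simp_all add: sym_act_eq_frag_extend frag_extend_add frag_extend_mult frag_extend_one
      mon_act_add mon_act_zero)

lemma additive_sym_lin: "additive sym_lin"
  by (simp add: additive_def sym_lin_def single_add sum.distrib)

lemma sym_lin_smult: "sym_lin (k *s a) = frag_cmul k (sym_lin a)"
  by (simp add: sym_lin_def frag_cmul_sum frag_cmul_single)

lemma sym_act_sym_lin:
  assumes "additive \<phi>"
  shows "sym_act \<phi> (sym_lin a) = sym_lin (\<phi> a)"
proof -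
  have "sym_lin a = (\<Sum>i\<in>UNIV. frag_cmul (a $ i) (frag_of (Poly_Mapping.single i 1)))"
    by (simp add: sym_lin_def frag_cmul_frag_of)
  then have "sym_act \<phi> (sym_lin a) = (\<Sum>i\<in>UNIV. frag_cmul (a $ i) (sym_lin (\<phi> (axis i 1))))"
    by (simp add: sym_act_eq_frag_extend frag_extend_sum frag_extend_cmul mon_act_single[simplified])
  also have "\<dots> = sym_lin (\<Sum>i\<in>UNIV. (a $ i) *s \<phi> (axis i 1))"
    by (simp add: additive.sum[OF additive_sym_lin] sym_lin_smult)
  also have "\<dots> = sym_lin (\<phi> a)"
    by (simp flip: additive_basis_expansion[OF assms])
  finally show ?thesis .
qed

lemma x_sym_dvd_x_sym_smult: "x_sym l dvd x_sym (k *s l)"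
  by (simp add: x_sym_def sym_lin_smult frag_cmul_eq_single_mult)

lemma x_sym_dvd_sym_act_diff:
  assumes "\<And>a. lat_mult (\<phi> a - \<psi> a) l"
  shows "x_sym l dvd sym_act \<phi> p - sym_act \<psi> p"
  unfolding sym_act_eq_frag_extend
proof (rule dvd_frag_extend_diff)
  fix m
  show "x_sym l dvd mon_act \<phi> m - mon_act \<psi> m"
    unfolding mon_act_eq_prod_UNIV
  proof (rule dvd_prod_power_diff)
    fix i
    obtain k where "\<phi> (axis i 1) - \<psi> (axis i 1) = k *s l"
      using assms unfolding lat_mult_def by blast
    then have "sym_lin (\<phi> (axis i 1)) - sym_lin (\<psi> (axis i 1)) = sym_lin (k *s l)"
      by (simp flip: additive.diff[OF additive_sym_lin])
    then show "x_sym l dvd sym_lin (\<phi> (axis i 1)) - sym_lin (\<psi> (axis i 1))"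
      using x_sym_dvd_x_sym_smult by (simp add: x_sym_def)
  qed
qed

lemma struct_alg_dvd_uedge:
  assumes "z \<in> struct_alg x V E l" and "uedge E u u'"
  shows "x (ulab E l u u') dvd z u - z u'"
proof (cases "(u, u') \<in> E")
  case True
  then show ?thesis using assms(1) by (auto simp: struct_alg_def ulab_def)
next
  case False
  then have "(u', u) \<in> E" using assms(2) by (simp add: uedge_def)
  then have "x (ulab E l u u') dvd z u' - z u"
    using assms(1) False by (auto simp: struct_alg_def ulab_def)
  then show ?thesis by (metis dvd_minus_iff minus_diff_eq)
qed

locale moment_graph_coefficients =
  fixes act :: "('n::finite lat \<Rightarrow> 'n lat) \<Rightarrow> 's::comm_ring_1 \<Rightarrow> 's"
    and x :: "'n lat \<Rightarrow> 's"
  assumes act_add: "additive \<phi> \<Longrightarrow> act \<phi> (p + q) = act \<phi> p + act \<phi> q"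
    and act_mult: "additive \<phi> \<Longrightarrow> act \<phi> (p * q) = act \<phi> p * act \<phi> q"
    and act_one: "additive \<phi> \<Longrightarrow> act \<phi> 1 = 1"
    and act_x: "additive \<phi> \<Longrightarrow> act \<phi> (x a) = x (\<phi> a)"
    and x_dvd_act_diff: "(\<And>a. lat_mult (\<phi> a - \<psi> a) l) \<Longrightarrow> x l dvd act \<phi> p - act \<psi> p"
    and x_dvd_x_smult: "x l dvd x (k *s l)"
begin

lemma x_dvd_act_diff_of_dvd_diff:
  assumes "additive \<phi>" and "\<And>a. lat_mult (\<phi> a - \<psi> a) l"
    and "x L dvd s - t" and "lat_mult (\<phi> L) l"
  shows "x l dvd act \<phi> s - act \<psi> t"
proof -
  obtain q where q: "s = t + x L * q"
    using assms(3) by (metis dvd_def diff_add_cancel add.commute)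
  obtain k where k: "\<phi> L = k *s l"
    using assms(4) by (auto simp: lat_mult_def)
  have "act \<phi> s - act \<psi> t = (act \<phi> t - act \<psi> t) + x (k *s l) * act \<phi> q"
    using assms(1) by (simp add: q act_add act_mult act_x k)
  moreover have "x l dvd act \<phi> t - act \<psi> t"
    by (rule x_dvd_act_diff) (fact assms(2))
  ultimately show ?thesis
    using x_dvd_x_smult by (metis dvd_add dvd_mult2)
qed

lemma pullback_in_struct_alg:
  assumes "moment_graph V le E l"
    and "mg_morphism V le E l V' le' E' l' fV fl"
    and "monodromy V E l \<xi>"
    and "\<forall>(v, w)\<in>E. fV v \<noteq> fV w \<longrightarrow> lat_mult (\<xi> v (ulab E' l' (fV v) (fV w))) (l (v, w))"
    and z: "z \<in> struct_alg x V' E' l'"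
  shows "pullback act \<xi> fV V z \<in> struct_alg x V E l"
proof -
  have "x (l (v, w)) dvd act (\<xi> v) (z (fV v)) - act (\<xi> w) (z (fV w))" if e: "(v, w) \<in> E" for v w
  proof -
    have \<xi>_congruent: "lat_mult (\<xi> v a - \<xi> w a) (l (v, w))" for a
      using assms(3) e by (auto simp: monodromy_def)
    show ?thesis
    proof (cases "fV v = fV w")
      case True
      then show ?thesis by (simp add: x_dvd_act_diff \<xi>_congruent)
    next
      case False
      show ?thesis
      proof (rule x_dvd_act_diff_of_dvd_diff)
        show "additive (\<xi> v)"
          using assms(1,3) e by (auto simp: moment_graph_def monodromy_def lat_aut_additive)
        show "x (ulab E' l' (fV v) (fV w)) dvd z (fV v) - z (fV w)"
          using assms(2) e False struct_alg_dvd_uedge[OF z] by (auto simp: mg_morphism_def)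
        show "lat_mult (\<xi> v (ulab E' l' (fV v) (fV w))) (l (v, w))"
          using assms(4) e False by auto
      qed (fact \<xi>_congruent)
    qed
  qed
  moreover have "(v, w) \<in> E \<Longrightarrow> v \<in> V \<and> w \<in> V" for v w
    using assms(1) by (auto simp: moment_graph_def)
  ultimately show ?thesis
    by (auto simp: struct_alg_def pullback_def)
qed

theorem pullback_ring_hom:
  assumes "moment_graph V le E l"
    and "mg_morphism V le E l V' le' E' l' fV fl"
    and "monodromy V E l \<xi>"
    and "\<forall>(v, w)\<in>E. fV v \<noteq> fV w \<longrightarrow> lat_mult (\<xi> v (ulab E' l' (fV v) (fV w))) (l (v, w))"
  shows "is_ring_hom_between x V E l V' E' l' (pullback act \<xi> fV V)"
proof -
  have "v \<in> V \<Longrightarrow> fV v \<in> V'" for v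
    using assms(2) by (simp add: mg_morphism_def)
  moreover have "v \<in> V \<Longrightarrow> additive (\<xi> v)" for v
    using assms(3) by (simp add: monodromy_def lat_aut_additive)
  ultimately show ?thesis
    using pullback_in_struct_alg[OF assms]
    by (auto simp: is_ring_hom_between_def pullback_def fun_eq_iff act_add act_mult act_one)
qed

end

interpretation grp_ring: moment_graph_coefficients grp_act x_grp
  by unfold_locales
    (simp_all add: grp_act_add grp_act_mult grp_act_one grp_act_x_grp x_grp_dvd_grp_act_diff
      x_grp_dvd_x_grp_smult)

interpretation sym_alg: moment_graph_coefficients sym_act x_sym
proof unfold_locales
  show "sym_act \<phi> (x_sym a) = x_sym (\<phi> a)" if "additive \<phi>" for \<phi> a
    using that by (simp add: x_sym_def sym_act_sym_lin)
qed (simp_all add: sym_act_add sym_act_mult sym_act_one x_sym_dvd_sym_act_diff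
    x_sym_dvd_x_sym_smult)

theorem mainTheorem2:
  fixes V :: "'v set" and le E :: "('v \<times> 'v) set" and l :: "'v \<times> 'v \<Rightarrow> 'n::finite lat"
    and V' :: "'u set" and le' E' :: "('u \<times> 'u) set" and l' :: "'u \<times> 'u \<Rightarrow> 'n lat"
    and fV :: "'v \<Rightarrow> 'u" and fl :: "'v \<Rightarrow> 'n lat \<Rightarrow> 'n lat"
    and \<xi> :: "'v \<Rightarrow> 'n lat \<Rightarrow> 'n lat"
  assumes "moment_graph V le E l"
    and "moment_graph V' le' E' l'"
    and "mg_morphism V le E l V' le' E' l' fV fl"
    and "monodromy V E l \<xi>"
    and "\<forall>(v, w)\<in>E. fV v \<noteq> fV w \<longrightarrow> lat_mult (\<xi> v (ulab E' l' (fV v) (fV w))) (l (v, w))"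
  shows "is_ring_hom_between x_grp V E l V' E' l' (pullback grp_act \<xi> fV V)
       \<and> is_ring_hom_between x_sym V E l V' E' l' (pullback sym_act \<xi> fV V)"
  using grp_ring.pullback_ring_hom[OF assms(1,3-5)] sym_alg.pullback_ring_hom[OF assms(1,3-5)]
  by blast

end
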